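(* Let $\alpha>0$. Let $u_0:\mathbb{R}\to[0,1]$ be uniformly continuous with $u_0>0$ on $\mathbb{R}$, $\liminf_{x\to-\infty}u_0>0$, $\lim_{x\to+\infty}u_0=0$, of class $C^2$ and nonincreasing on $[\xi_0,+\infty)$ for some $\xi_0>0$, and such that $\varphi_0:=-\ln u_0$ satisfies $\varphi_0'=o(\varphi_0^{-\alpha})$ and $\varphi_0''=o(\varphi_0')$ as $x\to+\infty$. Let $\rho>0$ and define $$w(t,x):=\exp\Big\{1-\big[(1+\varphi_0(x))^{\alpha+1}-\rho(\alpha+1)t\big]^{\frac{1}{\alpha+1}}\Big\},\qquad x_0(t):=\sup\Big\{x\in\mathbb{R}: u_0(x)=\exp\big(1-(\rho(\alpha+1)t+1)^{\frac{1}{\alpha+1}}\big)\Big\}.$$ Then there is $t^1>0$ such that $$w_x(t,x)+w_{xx}(t,x)\le 0\quad\text{for all } x\ge x_0(t)\text{ and } t\ge t^1.$$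
   Context: $w$ solves $w_t=\rho\, w/(1-\ln w)^\alpha$ with $w(0,\cdot)=u_0$; one has $w(t,x_0(t))=1$ and $0<w(t,x)\le1$ for $x\ge x_0(t)$. *)

theory Defs
  imports "HOL-Analysis.Analysis"
begin

definition phi0 :: "(real \<Rightarrow> real) \<Rightarrow> real \<Rightarrow> real" where
  "phi0 u0 x = - ln (u0 x)"

text \<open>The explicit solution w(t,x) of w_t = rho w/(1 - ln w)^alpha with w(0,.) = u0.\<close>
definition wsol :: "real \<Rightarrow> real \<Rightarrow> (real \<Rightarrow> real) \<Rightarrow> real \<Rightarrow> real \<Rightarrow> real" where
  "wsol \<alpha> \<rho> u0 t x =
     exp (1 - (((1 + phi0 u0 x) powr (\<alpha> + 1) - \<rho> * (\<alpha> + 1) * t) powr (1 / (\<alpha> + 1))))"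

definition x0 :: "real \<Rightarrow> real \<Rightarrow> (real \<Rightarrow> real) \<Rightarrow> real \<Rightarrow> real" where
  "x0 \<alpha> \<rho> u0 t =
     Sup {x. u0 x = exp (1 - (\<rho> * (\<alpha> + 1) * t + 1) powr (1 / (\<alpha> + 1)))}"

definition C2_on_ge :: "(real \<Rightarrow> real) \<Rightarrow> real \<Rightarrow> bool" where
  "C2_on_ge f a \<longleftrightarrow> (\<exists>f' f''.
     (\<forall>x\<ge>a. (f has_real_derivative f' x) (at x within {a..})) \<and>
     (\<forall>x\<ge>a. (f' has_real_derivative f'' x) (at x within {a..})) \<and>
     continuous_on {a..} f'')"

end

theory Submission
  imports Defs "HOL-Real_Asymp.Real_Asymp"
begin

(* Write w(t, x) = h (phi0 x) with h s = exp (1 - B s powr (1/(alpha+1))) and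
   B s = (1 + s) powr (alpha+1) - K, K = rho (alpha+1) t.  Then h' = - h m with
   m = B powr (-alpha/(alpha+1)) * (1 + s) powr alpha, and wherever B >= 1, i.e. wherever u0 lies
   below the level defining x0(t), one has 0 <= m <= (1 + s) powr alpha and
   h'' <= (1 + alpha) (1 + s) powr alpha h m.  Hence
     w_x + w_xx = h' phi0' + h'' phi0'^2 + h' phi0''
                <= h m phi0' ((1 + alpha) (1 + phi0) powr alpha phi0' - 1/2)
   as soon as |phi0''| <= phi0'/2, and the last factor is nonpositive as soon as
   (1 + phi0) powr alpha phi0' <= 1/(2 (1 + alpha)).  The hypotheses on phi0 give both conditions
   beyond some X.  Since u0 is bounded below by some delta > 0 on (-infinity, X] while the level
   tends to 0 as t grows, for large t the whole level set, and hence x0(t), lies beyond X. *)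

lemma deriv2_compose:
  fixes f g :: "real \<Rightarrow> real"
  assumes "open S" "x \<in> S"
    and g: "\<And>y. y \<in> S \<Longrightarrow> (g has_real_derivative g' y) (at y)"
    and g': "(g' has_real_derivative g'') (at x)"
    and f: "\<And>y. y \<in> S \<Longrightarrow> (f has_real_derivative f' (g y)) (at (g y))"
    and f': "(f' has_real_derivative f'') (at (g x))"
  shows "deriv (\<lambda>y. f (g y)) x = f' (g x) * g' x"
    and "deriv (deriv (\<lambda>y. f (g y))) x = f'' * (g' x)\<^sup>2 + f' (g x) * g''"
proof -
  have first: "deriv (\<lambda>y. f (g y)) y = f' (g y) * g' y" if "y \<in> S" for y
    by (rule DERIV_imp_deriv) (rule DERIV_chain2[OF f g, OF that that])
  then show "deriv (\<lambda>y. f (g y)) x = f' (g x) * g' x"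
    using assms(2) .
  have "((\<lambda>y. f' (g y) * g' y) has_real_derivative f'' * g' x * g' x + g'' * f' (g x)) (at x)"
    by (intro DERIV_mult DERIV_chain2[where g = g, OF f' g] g' assms(2))
  then have "(deriv (\<lambda>y. f (g y)) has_real_derivative f'' * g' x * g' x + g'' * f' (g x)) (at x)"
    by (rule has_field_derivative_transform_within_open[OF _ assms(1,2)]) (simp add: first)
  then show "deriv (deriv (\<lambda>y. f (g y))) x = f'' * (g' x)\<^sup>2 + f' (g x) * g''"
    by (simp add: DERIV_imp_deriv power2_eq_square algebra_simps)
qed

lemma DERIV_nonpos_if_nonincreasing_right:
  fixes f :: "real \<Rightarrow> real"
  assumes "(f has_real_derivative f') (at x)" and "\<And>y. x \<le> y \<Longrightarrow> f y \<le> f x"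
  shows "f' \<le> 0"
proof (rule ccontr)
  assume "\<not> f' \<le> 0"
  then obtain d where "d > 0" "\<And>h. 0 < h \<Longrightarrow> h < d \<Longrightarrow> f x < f (x + h)"
    using DERIV_pos_inc_right[OF assms(1)] by force
  then have "f x < f (x + d / 2)"
    by simp
  with assms(2)[of "x + d / 2"] \<open>d > 0\<close> show False
    by simp
qed

lemma C2_on_ge_derivatives:
  assumes "C2_on_ge f a"
  obtains f' f'' where "\<And>x. x > a \<Longrightarrow> (f has_real_derivative f' x) (at x)"
    and "\<And>x. x > a \<Longrightarrow> (f' has_real_derivative f'' x) (at x)"
proof -
  obtain f' f'' where f': "\<forall>x\<ge>a. (f has_real_derivative f' x) (at x within {a..})"
    and f'': "\<forall>x\<ge>a. (f' has_real_derivative f'' x) (at x within {a..})"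
    using assms unfolding C2_on_ge_def by blast
  have "at x within {a..} = at x" if "x > a" for x
    using that by (intro at_within_interior) auto
  then show ?thesis
    using that f' f'' by (metis less_imp_le)
qed

lemma eventually_power_times_slope_le:
  fixes \<phi> \<phi>' :: "real \<Rightarrow> real"
  assumes "a > 0" "\<epsilon> > 0"
    and slope: "\<phi>' \<in> o[at_top](\<lambda>x. \<phi> x powr - a)"
    and large: "eventually (\<lambda>x. \<phi> x \<ge> 1) at_top"
  shows "eventually (\<lambda>x. (1 + \<phi> x) powr a * \<phi>' x \<le> \<epsilon>) at_top"
proof -
  have "\<epsilon> / 2 powr a > 0"
    using assms(2) by simp
  from landau_o.smallD[OF slope this] large
  show ?thesis
  proof eventually_elim
    case (elim x)
    then have \<phi>': "\<bar>\<phi>' x\<bar> \<le> \<epsilon> / 2 powr a * \<phi> x powr - a"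
      by simp
    have "(1 + \<phi> x) powr a \<le> (2 * \<phi> x) powr a"
      using elim assms(1) by (intro powr_mono2) auto
    also have "\<dots> = 2 powr a * \<phi> x powr a"
      using elim by (simp add: powr_mult)
    finally have power: "(1 + \<phi> x) powr a \<le> 2 powr a * \<phi> x powr a" .
    have "(1 + \<phi> x) powr a * \<phi>' x \<le> (1 + \<phi> x) powr a * \<bar>\<phi>' x\<bar>"
      by (intro mult_left_mono) auto
    also have "\<dots> \<le> 2 powr a * \<phi> x powr a * (\<epsilon> / 2 powr a * \<phi> x powr - a)"
      using power \<phi>' by (intro mult_mono) auto
    also have "\<dots> = \<epsilon> * (\<phi> x powr a * \<phi> x powr - a)"
      by simp
    also have "\<phi> x powr a * \<phi> x powr - a = 1"
      using elim by (simp add: powr_add[symmetric])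
    finally show ?case
      by simp
  qed
qed

lemma positive_lower_bound_atMost:
  fixes f :: "real \<Rightarrow> real"
  assumes "continuous_on UNIV f" "\<And>x. f x > 0" "Liminf at_bot (\<lambda>x. ereal (f x)) > 0"
  obtains \<delta> where "\<delta> > 0" "\<And>y. y \<le> X \<Longrightarrow> \<delta> \<le> f y"
proof -
  obtain z where "0 < z" and "ereal z < Liminf at_bot (\<lambda>x. ereal (f x))"
    using ereal_dense2[OF assms(3)] by auto
  from less_LiminfD[OF this(2)] have "eventually (\<lambda>y. ereal z < ereal (f y)) at_bot" .
  then have "eventually (\<lambda>y. z < f y) at_bot"
    by simp
  then obtain L where L: "\<And>y. y \<le> L \<Longrightarrow> z < f y"
    unfolding eventually_at_bot_linorder by blast
  obtain m where m: "\<And>y. y \<in> {L..X} \<Longrightarrow> f m \<le> f y"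
  proof (cases "L \<le> X")
    case True
    have "continuous_on {L..X} f"
      using assms(1) by (rule continuous_on_subset) simp
    from continuous_attains_inf[OF compact_Icc _ this] True
    obtain m where "\<forall>y\<in>{L..X}. f m \<le> f y"
      by auto
    then show ?thesis
      using that by blast
  next
    case False
    then show ?thesis
      using that by simp
  qed
  show ?thesis
  proof (rule that[of "min z (f m)"])
    show "min z (f m) > 0"
      using \<open>0 < z\<close> assms(2) by simp
    show "min z (f m) \<le> f y" if "y \<le> X" for y
      using L[of y] m[of y] that by (cases "y \<le> L") auto
  qed
qed

lemma ge_Sup_level_set:
  fixes f :: "real \<Rightarrow> real"
  assumes cont: "continuous_on UNIV f" and lim: "(f \<longlongrightarrow> 0) at_top" and "c > 0"
    and above: "\<And>y. y \<le> X \<Longrightarrow> c < f y"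
    and nonincreasing: "\<And>y z. X \<le> y \<Longrightarrow> y \<le> z \<Longrightarrow> f z \<le> f y"
    and "Sup {y. f y = c} \<le> x"
  shows "X < x" and "f x \<le> c"
proof -
  obtain M where M: "\<And>y. y \<ge> M \<Longrightarrow> f y < c"
    using order_tendstoD(2)[OF lim \<open>c > 0\<close>] by (auto simp: eventually_at_top_linorder)
  have "\<exists>s. X \<le> s \<and> s \<le> max M X \<and> f s = c"
    using M[of "max M X"] above[of X] cont
    by (intro IVT2') (auto intro: continuous_on_subset)
  then obtain s where "X \<le> s" "f s = c"
    by blast
  then have "X < s"
    using above[of s] by fastforce
  have "y \<le> M" if "f y = c" for y
    using M[of y] that by (cases "M \<le> y") auto
  then have "bdd_above {y. f y = c}"
    by (intro bdd_aboveI[of _ M]) blast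
  then have "s \<le> Sup {y. f y = c}"
    using \<open>f s = c\<close> by (intro cSup_upper) auto
  then have "s \<le> x"
    using assms(6) by linarith
  then show "X < x" "f x \<le> c"
    using \<open>X < s\<close> \<open>f s = c\<close> nonincreasing[of s x] by auto
qed

definition radicand :: "real \<Rightarrow> real \<Rightarrow> real \<Rightarrow> real" where
  "radicand a K s = (1 + s) powr (a + 1) - K"

definition profile :: "real \<Rightarrow> real \<Rightarrow> real \<Rightarrow> real" where
  "profile a K s = exp (1 - radicand a K s powr (1 / (a + 1)))"

definition profile_rate :: "real \<Rightarrow> real \<Rightarrow> real \<Rightarrow> real" where
  "profile_rate a K s = radicand a K s powr (1 / (a + 1) - 1) * (1 + s) powr a"

lemma radicand_has_derivative:
  assumes "1 + s > 0"
  shows "(radicand a K has_real_derivative (a + 1) * (1 + s) powr a) (at s)"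
  unfolding radicand_def[abs_def] using assms
  by (auto intro!: derivative_eq_intros)

lemma profile_has_derivative:
  assumes "a > 0" "1 + s > 0" "radicand a K s > 0"
  shows "(profile a K has_real_derivative - profile a K s * profile_rate a K s) (at s)"
proof -
  have "(profile a K has_real_derivative
      profile a K s * - (1 / (a + 1) * radicand a K s powr (1 / (a + 1) - 1) * ((a + 1) * (1 + s) powr a))) (at s)"
    unfolding profile_def[abs_def]
    by (rule derivative_eq_intros DERIV_fun_powr radicand_has_derivative assms refl)+ simp
  moreover have "1 / (a + 1) * X * ((a + 1) * Y) = X * Y" for X Y :: real
    using assms(1) by simp
  ultimately show ?thesis
    by (simp add: profile_rate_def)
qed

lemma profile_rate_derivative_bound:
  assumes "a > 0" "s \<ge> 0" "radicand a K s \<ge> 1"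
  obtains m' where "(profile_rate a K has_real_derivative m') (at s)"
    and "- m' \<le> a * profile_rate a K s * (1 + s) powr a"
proof -
  define B where "B = radicand a K s"
  define e where "e = 1 / (a + 1) - 1"
  have "a + 1 \<noteq> 0"
    using assms(1) by simp
  then have e: "e * (a + 1) = - a"
    by (simp add: e_def field_simps)
  have dB: "((\<lambda>s. radicand a K s powr e) has_real_derivative
      e * B powr (e - 1) * ((a + 1) * (1 + s) powr a)) (at s)"
    using DERIV_fun_powr[OF radicand_has_derivative, of s a K e] assms unfolding B_def by simp
  have dP: "((\<lambda>s. (1 + s) powr a) has_real_derivative a * (1 + s) powr (a - 1)) (at s)"
    using assms(2) by (auto intro!: derivative_eq_intros)
  have "- (e * B powr (e - 1) * ((a + 1) * (1 + s) powr a) * (1 + s) powr a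
      + a * (1 + s) powr (a - 1) * B powr e) \<le> a * profile_rate a K s * (1 + s) powr a"
  proof -
    have "e * B powr (e - 1) * ((a + 1) * (1 + s) powr a) * (1 + s) powr a
        = (e * (a + 1)) * (B powr (e - 1) * (1 + s) powr a * (1 + s) powr a)"
      by (simp only: ac_simps)
    also have "\<dots> = - a * B powr (e - 1) * (1 + s) powr a * (1 + s) powr a"
      unfolding e by simp
    finally have first: "e * B powr (e - 1) * ((a + 1) * (1 + s) powr a) * (1 + s) powr a
        = - a * B powr (e - 1) * (1 + s) powr a * (1 + s) powr a" .
    have "B powr (e - 1) \<le> B powr e"
      using assms(3) unfolding B_def by (intro powr_mono) auto
    then have "a * B powr (e - 1) * (1 + s) powr a * (1 + s) powr a
        \<le> a * B powr e * (1 + s) powr a * (1 + s) powr a"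
      using assms(1) by (intro mult_right_mono mult_left_mono) auto
    moreover have "0 \<le> a * (1 + s) powr (a - 1) * B powr e"
      using assms(1) by simp
    ultimately show ?thesis
      unfolding first profile_rate_def B_def[symmetric] e_def[symmetric] by simp
  qed
  moreover have "(profile_rate a K has_real_derivative
      e * B powr (e - 1) * ((a + 1) * (1 + s) powr a) * (1 + s) powr a
      + a * (1 + s) powr (a - 1) * B powr e) (at s)"
    using DERIV_mult[OF dB dP] unfolding profile_rate_def[abs_def] e_def B_def .
  ultimately show ?thesis using that by blast
qed

lemma profile_second_derivative_bound:
  assumes "a > 0" "s \<ge> 0" "radicand a K s \<ge> 1"
  obtains h'' where "((\<lambda>s. - profile a K s * profile_rate a K s) has_real_derivative h'') (at s)"
    and "h'' \<le> (1 + a) * (1 + s) powr a * (profile a K s * profile_rate a K s)"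
proof -
  obtain m' where dm: "(profile_rate a K has_real_derivative m') (at s)"
    and m': "- m' \<le> a * profile_rate a K s * (1 + s) powr a"
    using profile_rate_derivative_bound[OF assms] .
  define h where "h = profile a K s"
  define m where "m = profile_rate a K s"
  have dh: "(profile a K has_real_derivative - h * m) (at s)"
    unfolding h_def m_def using assms by (intro profile_has_derivative) auto
  have "((\<lambda>s. - profile a K s * profile_rate a K s) has_real_derivative
      h * (m * m + - m')) (at s)"
    using DERIV_mult[OF DERIV_minus[OF dh] dm] unfolding h_def m_def by (simp add: algebra_simps)
  moreover have "h * (m * m + - m') \<le> (1 + a) * (1 + s) powr a * (h * m)"
  proof -
    have "m \<le> (1 + s) powr a"
      using powr_mono[of "1 / (a + 1) - 1" 0 "radicand a K s"] assms
      unfolding m_def profile_rate_def by (simp add: mult_left_le_one_le)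
    then have "m * m \<le> m * (1 + s) powr a"
      unfolding m_def profile_rate_def by (intro mult_left_mono) auto
    then have "m * m + - m' \<le> (1 + a) * (1 + s) powr a * m"
      using m' unfolding m_def by (simp add: algebra_simps)
    then have "h * (m * m + - m') \<le> h * ((1 + a) * (1 + s) powr a * m)"
      by (rule mult_left_mono) (simp add: h_def profile_def)
    then show ?thesis
      by (simp add: algebra_simps)
  qed
  ultimately show ?thesis
    using that unfolding h_def m_def by blast
qed

lemma profile_compose_deriv_add_deriv2_nonpos:
  fixes \<phi> \<phi>' :: "real \<Rightarrow> real"
  assumes "a > 0" "open S" "x \<in> S"
    and \<phi>: "\<And>y. y \<in> S \<Longrightarrow> (\<phi> has_real_derivative \<phi>' y) (at y)"
    and \<phi>': "(\<phi>' has_real_derivative \<phi>'') (at x)"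
    and \<phi>_nonneg: "\<And>y. y \<in> S \<Longrightarrow> \<phi> y \<ge> 0"
    and radicand_ge: "radicand a K (\<phi> x) \<ge> 1"
    and slope_nonneg: "\<phi>' x \<ge> 0"
    and convexity_small: "\<bar>\<phi>''\<bar> \<le> 1 / 2 * \<bar>\<phi>' x\<bar>"
    and slope_small: "(1 + \<phi> x) powr a * \<phi>' x \<le> 1 / (2 * (1 + a))"
  shows "deriv (\<lambda>y. profile a K (\<phi> y)) x + deriv (deriv (\<lambda>y. profile a K (\<phi> y))) x \<le> 0"
proof -
  define S' where "S' = S \<inter> (\<lambda>y. radicand a K (\<phi> y)) -` {0<..}"
  have "continuous_on S \<phi>"
    by (rule DERIV_continuous_on) (rule has_field_derivative_at_within[OF \<phi>])
  then have "continuous_on S (\<lambda>y. radicand a K (\<phi> y))"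
    unfolding radicand_def using \<phi>_nonneg by (intro continuous_intros) (auto simp: add_nonneg_eq_0_iff)
  then have "open S'"
    unfolding S'_def using assms(2) by (intro continuous_open_preimage) auto
  have "x \<in> S'"
    unfolding S'_def using assms(3) radicand_ge by simp
  obtain h'' where dh': "((\<lambda>s. - profile a K s * profile_rate a K s) has_real_derivative h'') (at (\<phi> x))"
    and h'': "h'' \<le> (1 + a) * (1 + \<phi> x) powr a * (profile a K (\<phi> x) * profile_rate a K (\<phi> x))"
    using profile_second_derivative_bound[OF assms(1) \<phi>_nonneg[OF assms(3)] radicand_ge] .
  have dh: "(profile a K has_real_derivative - profile a K (\<phi> y) * profile_rate a K (\<phi> y)) (at (\<phi> y))"
    if "y \<in> S'" for y
    using that assms(1) \<phi>_nonneg by (intro profile_has_derivative) (auto simp: S'_def add_pos_nonneg)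
  have \<phi>_S': "(\<phi> has_real_derivative \<phi>' y) (at y)" if "y \<in> S'" for y
    using that \<phi> unfolding S'_def by blast
  define g where "g = profile a K (\<phi> x) * profile_rate a K (\<phi> x)"
  have "g \<ge> 0"
    unfolding g_def profile_def profile_rate_def by simp
  have "deriv (\<lambda>y. profile a K (\<phi> y)) x + deriv (deriv (\<lambda>y. profile a K (\<phi> y))) x
      = - g * \<phi>' x + h'' * (\<phi>' x)\<^sup>2 - g * \<phi>''"
    using deriv2_compose[OF \<open>open S'\<close> \<open>x \<in> S'\<close> \<phi>_S' \<phi>' dh dh'] by (simp add: g_def)
  also have "\<dots> \<le> - g * \<phi>' x + (1 + a) * (1 + \<phi> x) powr a * g * (\<phi>' x)\<^sup>2 + g * (\<phi>' x / 2)"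
  proof -
    have "h'' * (\<phi>' x)\<^sup>2 \<le> (1 + a) * (1 + \<phi> x) powr a * g * (\<phi>' x)\<^sup>2"
      using h'' unfolding g_def by (intro mult_right_mono) auto
    moreover have "g * (- \<phi>'') \<le> g * (\<phi>' x / 2)"
      using \<open>g \<ge> 0\<close> convexity_small slope_nonneg by (intro mult_left_mono) auto
    ultimately show ?thesis by linarith
  qed
  also have "\<dots> = g * \<phi>' x * ((1 + a) * (1 + \<phi> x) powr a * \<phi>' x - 1 / 2)"
    by (simp add: power2_eq_square algebra_simps)
  also have "\<dots> \<le> 0"
  proof -
    have "(1 + a) * ((1 + \<phi> x) powr a * \<phi>' x) \<le> (1 + a) * (1 / (2 * (1 + a)))"
      using slope_small assms(1) by (intro mult_left_mono) auto
    also have "\<dots> = 1 / 2"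
      using assms(1) by simp
    finally have "(1 + a) * (1 + \<phi> x) powr a * \<phi>' x \<le> 1 / 2"
      by (simp only: mult.assoc)
    then show ?thesis
      using \<open>g \<ge> 0\<close> slope_nonneg by (intro mult_nonneg_nonpos) auto
  qed
  finally show ?thesis .
qed

lemma phi0_regular:
  assumes "C2_on_ge u0 \<xi>" and pos: "\<And>x. u0 x > 0"
    and nonincreasing: "\<And>x y. \<xi> \<le> x \<Longrightarrow> x \<le> y \<Longrightarrow> u0 y \<le> u0 x"
    and "x > \<xi>"
  shows "(phi0 u0 has_real_derivative deriv (phi0 u0) x) (at x)"
    and "deriv (phi0 u0) x \<ge> 0"
    and "(deriv (phi0 u0) has_real_derivative deriv (deriv (phi0 u0)) x) (at x)"
proof -
  obtain u1 u2 where u1: "\<And>x. x > \<xi> \<Longrightarrow> (u0 has_real_derivative u1 x) (at x)"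
    and u2: "\<And>x. x > \<xi> \<Longrightarrow> (u1 has_real_derivative u2 x) (at x)"
    using C2_on_ge_derivatives[OF assms(1)] by blast
  have d1: "(phi0 u0 has_real_derivative - u1 y / u0 y) (at y)" if "y > \<xi>" for y
    unfolding phi0_def[abs_def] using u1[OF that] pos[of y]
    by (auto intro!: derivative_eq_intros simp: field_simps)
  then have deriv_eq: "deriv (phi0 u0) y = - u1 y / u0 y" if "y > \<xi>" for y
    using that by (intro DERIV_imp_deriv)
  show "(phi0 u0 has_real_derivative deriv (phi0 u0) x) (at x)"
    using d1[OF assms(4)] deriv_eq[OF assms(4)] by simp
  have "u1 x \<le> 0"
    using u1[OF assms(4)] nonincreasing assms(4) by (intro DERIV_nonpos_if_nonincreasing_right) auto
  then show "deriv (phi0 u0) x \<ge> 0"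
    using deriv_eq[OF assms(4)] pos[of x] by (simp add: divide_nonpos_pos)
  have "((\<lambda>y. - u1 y / u0 y) has_real_derivative - (u2 x * u0 x - u1 x * u1 x) / (u0 x * u0 x)) (at x)"
    using pos[of x] u1[OF assms(4)] u2[OF assms(4)]
    by (auto intro!: derivative_eq_intros simp: field_simps power2_eq_square)
  then have "(deriv (phi0 u0) has_real_derivative - (u2 x * u0 x - u1 x * u1 x) / (u0 x * u0 x)) (at x)"
    by (rule has_field_derivative_transform_within_open[of _ _ _ "{\<xi><..}"])
      (use assms(4) deriv_eq in auto)
  then show "(deriv (phi0 u0) has_real_derivative deriv (deriv (phi0 u0)) x) (at x)"
    by (simp add: DERIV_imp_deriv)
qed

lemma phi0_flat_eventually:
  assumes "\<alpha> > 0" and pos: "\<And>x. u0 x > 0" and lim: "(u0 \<longlongrightarrow> 0) at_top"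
    and slope: "deriv (phi0 u0) \<in> o[at_top](\<lambda>x. phi0 u0 x powr - \<alpha>)"
    and convexity: "deriv (deriv (phi0 u0)) \<in> o[at_top](deriv (phi0 u0))"
  obtains X where "\<xi> \<le> X"
    and "\<And>x. X \<le> x \<Longrightarrow> (1 + phi0 u0 x) powr \<alpha> * deriv (phi0 u0) x \<le> 1 / (2 * (1 + \<alpha>))"
    and "\<And>x. X \<le> x \<Longrightarrow> \<bar>deriv (deriv (phi0 u0)) x\<bar> \<le> 1 / 2 * \<bar>deriv (phi0 u0) x\<bar>"
proof -
  have "eventually (\<lambda>x. u0 x < exp (- 1)) at_top"
    using lim by (rule order_tendstoD) simp
  then have "eventually (\<lambda>x. phi0 u0 x \<ge> 1) at_top"
  proof eventually_elim
    case (elim x)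
    then have "ln (u0 x) < ln (exp (- 1))"
      using pos[of x] by (subst ln_less_cancel_iff) auto
    then show ?case
      unfolding phi0_def by simp
  qed
  then have "eventually (\<lambda>x. (1 + phi0 u0 x) powr \<alpha> * deriv (phi0 u0) x \<le> 1 / (2 * (1 + \<alpha>))) at_top"
    using assms(1) slope by (intro eventually_power_times_slope_le) auto
  moreover have "eventually (\<lambda>x. \<bar>deriv (deriv (phi0 u0)) x\<bar> \<le> 1 / 2 * \<bar>deriv (phi0 u0) x\<bar>) at_top"
    using landau_o.smallD[OF convexity, of "1 / 2"] by simp
  ultimately have "eventually (\<lambda>x. \<xi> \<le> x
      \<and> (1 + phi0 u0 x) powr \<alpha> * deriv (phi0 u0) x \<le> 1 / (2 * (1 + \<alpha>))
      \<and> \<bar>deriv (deriv (phi0 u0)) x\<bar> \<le> 1 / 2 * \<bar>deriv (phi0 u0) x\<bar>) at_top"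
    using eventually_ge_at_top[of \<xi>] by eventually_elim blast
  then obtain X where "\<And>x. X \<le> x \<Longrightarrow> \<xi> \<le> x
      \<and> (1 + phi0 u0 x) powr \<alpha> * deriv (phi0 u0) x \<le> 1 / (2 * (1 + \<alpha>))
      \<and> \<bar>deriv (deriv (phi0 u0)) x\<bar> \<le> 1 / 2 * \<bar>deriv (phi0 u0) x\<bar>"
    unfolding eventually_at_top_linorder by blast
  then show ?thesis
    using that[of X] by auto
qed

(* w(t, x) = 1 exactly where u0 x = x0_level alpha rho t. *)
definition x0_level :: "real \<Rightarrow> real \<Rightarrow> real \<Rightarrow> real" where
  "x0_level \<alpha> \<rho> t = exp (1 - (\<rho> * (\<alpha> + 1) * t + 1) powr (1 / (\<alpha> + 1)))"

lemma x0_eq_Sup_level_set: "x0 \<alpha> \<rho> u0 t = Sup {y. u0 y = x0_level \<alpha> \<rho> t}"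
  by (simp add: x0_def x0_level_def)

lemma x0_level_eventually_less:
  assumes "\<alpha> > 0" "\<rho> > 0" "\<delta> > 0"
  obtains t1 where "t1 > 0" and "\<And>t. t1 \<le> t \<Longrightarrow> x0_level \<alpha> \<rho> t < \<delta>"
proof -
  have "(x0_level \<alpha> \<rho> \<longlongrightarrow> 0) at_top"
    unfolding x0_level_def[abs_def] using assms(1,2) by real_asymp
  from order_tendstoD(2)[OF this assms(3)] eventually_gt_at_top[of 0]
  have "eventually (\<lambda>t. 0 < t \<and> x0_level \<alpha> \<rho> t < \<delta>) at_top"
    by eventually_elim blast
  then obtain t1 where "\<And>t. t1 \<le> t \<Longrightarrow> 0 < t \<and> x0_level \<alpha> \<rho> t < \<delta>"
    unfolding eventually_at_top_linorder by blast
  then show ?thesis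
    using that[of t1] by auto
qed

lemma wsol_eq_profile: "wsol \<alpha> \<rho> u0 t = (\<lambda>x. profile \<alpha> (\<rho> * (\<alpha> + 1) * t) (phi0 u0 x))"
  by (simp add: fun_eq_iff wsol_def profile_def radicand_def)

lemma one_le_radicand_if_below_x0_level:
  assumes "\<alpha> > 0" "\<rho> > 0" "t \<ge> 0" "0 < u0 x" "u0 x \<le> x0_level \<alpha> \<rho> t"
  shows "1 \<le> radicand \<alpha> (\<rho> * (\<alpha> + 1) * t) (phi0 u0 x)"
proof -
  define K where "K = \<rho> * (\<alpha> + 1) * t"
  have "K \<ge> 0"
    unfolding K_def using assms(1-3) by simp
  have "ln (u0 x) \<le> ln (x0_level \<alpha> \<rho> t)"
    using assms(4,5) by (simp only: ln_le_cancel_iff x0_level_def exp_gt_zero)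
  then have "ln (u0 x) \<le> 1 - (K + 1) powr (1 / (\<alpha> + 1))"
    unfolding x0_level_def K_def by simp
  then have "(K + 1) powr (1 / (\<alpha> + 1)) \<le> 1 + phi0 u0 x"
    unfolding phi0_def by simp
  then have "((K + 1) powr (1 / (\<alpha> + 1))) powr (\<alpha> + 1) \<le> (1 + phi0 u0 x) powr (\<alpha> + 1)"
    using assms(1) by (intro powr_mono2) auto
  moreover have "((K + 1) powr (1 / (\<alpha> + 1))) powr (\<alpha> + 1) = K + 1"
    using assms(1) \<open>K \<ge> 0\<close> by (simp add: powr_powr)
  ultimately show ?thesis
    unfolding radicand_def K_def by simp
qed

lemma wsol_deriv_add_deriv2_nonpos:
  assumes "\<alpha> > 0" "\<rho> > 0" "t \<ge> 0"
    and "C2_on_ge u0 \<xi>" and pos: "\<And>x. 0 < u0 x" and le_one: "\<And>x. u0 x \<le> 1"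
    and nonincreasing: "\<And>x y. \<xi> \<le> x \<Longrightarrow> x \<le> y \<Longrightarrow> u0 y \<le> u0 x"
    and "\<xi> < x" "u0 x \<le> x0_level \<alpha> \<rho> t"
    and "(1 + phi0 u0 x) powr \<alpha> * deriv (phi0 u0) x \<le> 1 / (2 * (1 + \<alpha>))"
    and "\<bar>deriv (deriv (phi0 u0)) x\<bar> \<le> 1 / 2 * \<bar>deriv (phi0 u0) x\<bar>"
  shows "deriv (wsol \<alpha> \<rho> u0 t) x + deriv (deriv (wsol \<alpha> \<rho> u0 t)) x \<le> 0"
proof -
  have "phi0 u0 y \<ge> 0" for y
    using pos[of y] le_one[of y] unfolding phi0_def by simp
  moreover have "1 \<le> radicand \<alpha> (\<rho> * (\<alpha> + 1) * t) (phi0 u0 x)"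
    using assms(1-3) pos assms(9) by (rule one_le_radicand_if_below_x0_level)
  ultimately show ?thesis
    unfolding wsol_eq_profile
    using assms(1,8-11) phi0_regular[OF assms(4) pos nonincreasing]
    by (intro profile_compose_deriv_add_deriv2_nonpos[where S = "{\<xi><..}" and \<phi>' = "deriv (phi0 u0)"])
      auto
qed

theorem lemma3p2:
  fixes \<alpha> \<rho> :: real and u0 :: "real \<Rightarrow> real"
  assumes alpha_pos: "\<alpha> > 0"
    and rho_pos: "\<rho> > 0"
    and uc: "uniformly_continuous_on UNIV u0"
    and range01: "\<And>x. 0 \<le> u0 x \<and> u0 x \<le> 1"
    and pos: "\<And>x. u0 x > 0"
    and liminf_left: "Liminf at_bot (\<lambda>x. ereal (u0 x)) > 0"
    and lim_right: "(u0 \<longlongrightarrow> 0) at_top"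
    and xi0: "\<xi>0 > 0" "C2_on_ge u0 \<xi>0" "\<And>x y. \<xi>0 \<le> x \<Longrightarrow> x \<le> y \<Longrightarrow> u0 y \<le> u0 x"
    and phi_d1: "(\<lambda>x. deriv (phi0 u0) x) \<in> o[at_top](\<lambda>x. (phi0 u0 x) powr (- \<alpha>))"
    and phi_d2: "(\<lambda>x. deriv (deriv (phi0 u0)) x) \<in> o[at_top](\<lambda>x. deriv (phi0 u0) x)"
  shows "\<exists>t1>0. \<forall>t\<ge>t1. \<forall>x\<ge>x0 \<alpha> \<rho> u0 t.
           deriv (\<lambda>y. wsol \<alpha> \<rho> u0 t y) x + deriv (deriv (\<lambda>y. wsol \<alpha> \<rho> u0 t y)) x \<le> 0"
proof -
  have cont: "continuous_on UNIV u0"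
    using uc by (rule uniformly_continuous_imp_continuous)
  obtain X where "\<xi>0 \<le> X" and flat:
    "\<And>x. X \<le> x \<Longrightarrow> (1 + phi0 u0 x) powr \<alpha> * deriv (phi0 u0) x \<le> 1 / (2 * (1 + \<alpha>))"
    "\<And>x. X \<le> x \<Longrightarrow> \<bar>deriv (deriv (phi0 u0)) x\<bar> \<le> 1 / 2 * \<bar>deriv (phi0 u0) x\<bar>"
    using phi0_flat_eventually[OF alpha_pos pos lim_right] phi_d1 phi_d2 by auto
  obtain \<delta> where "\<delta> > 0" and \<delta>: "\<And>y. y \<le> X \<Longrightarrow> \<delta> \<le> u0 y"
    using positive_lower_bound_atMost[OF cont pos liminf_left] by blast
  obtain t1 where "t1 > 0" and t1: "\<And>t. t1 \<le> t \<Longrightarrow> x0_level \<alpha> \<rho> t < \<delta>"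
    using x0_level_eventually_less[OF alpha_pos rho_pos \<open>\<delta> > 0\<close>] by blast
  have "deriv (wsol \<alpha> \<rho> u0 t) x + deriv (deriv (wsol \<alpha> \<rho> u0 t)) x \<le> 0"
    if "t1 \<le> t" "x0 \<alpha> \<rho> u0 t \<le> x" for t x
  proof -
    have "X < x" "u0 x \<le> x0_level \<alpha> \<rho> t"
      using ge_Sup_level_set[OF cont lim_right, of "x0_level \<alpha> \<rho> t" X x] that t1[OF that(1)] \<delta>
        xi0(3) \<open>\<xi>0 \<le> X\<close> by (force simp: x0_level_def x0_eq_Sup_level_set)+
    then show ?thesis
      using \<open>\<xi>0 \<le> X\<close> \<open>t1 > 0\<close> that(1) flat range01 pos
      by (intro wsol_deriv_add_deriv2_nonpos[OF alpha_pos rho_pos _ xi0(2) pos _ xi0(3)]) auto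
  qed
  then show ?thesis
    using \<open>t1 > 0\<close> by blast
qed

end
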